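(* Let $A$ be a Noetherian commutative ring with identity, let $A[\mathbf{x}]=A[x_1,\ldots,x_n]$ be equipped with a monomial order, let $I\subset A[\mathbf{x}]$ be an ideal, let $M=A[\mathbf{x}]/I$, and let $p\subset A$ be a prime ideal. The following two statements are equivalent: (a) the natural map $f:A_p\to M_p$ is surjective; (b) $\mathrm{in}(I)_{x_i}\,A_p=(1)$ for each $i=1,\ldots,n$.
   Context: A monomial order $>$ is a total order on monomials such that $\mathbf{x}^E>\mathbf{x}^F$ implies $\mathbf{x}^G\mathbf{x}^E>\mathbf{x}^G\mathbf{x}^F$, and $x_i>1$ for each $i$. $\mathrm{in}(f)$ is the greatest term $c\,\mathbf{x}^E$ ($c\neq0$) of a nonzero polynomial $f$; $\mathrm{in}(I)$ is the ideal generated by all $\mathrm{in}(f)$, $f\in I$. For an ideal $J\subset A[\mathbf{x}]$ and monomial $\mathbf{x}^E$, the coefficient ideal is $J_{\mathbf{x}^E}=(c\in A\mid c\,\mathbf{x}^E\in J)\subset A$; $J_{x_i}$ is the coefficient ideal for the monomial $x_i$, and $J_{x_i}A_p$ its extension to $A_p$. *)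

theory Defs
  imports Main "HOL-Library.Poly_Mapping"
begin

(* Polynomials in variables x_0,...,x_{n-1} over A: finitely supported maps
   from monomials (exponent vectors nat =>0 nat) to coefficients. *)
type_synonym 'a mpoly = "(nat \<Rightarrow>\<^sub>0 nat) \<Rightarrow>\<^sub>0 'a"

definition monoms :: "nat \<Rightarrow> (nat \<Rightarrow>\<^sub>0 nat) set" where
  "monoms n = {E. Poly_Mapping.keys E \<subseteq> {..<n}}"

definition polys :: "nat \<Rightarrow> 'a::zero mpoly set" where
  "polys n = {f. Poly_Mapping.keys f \<subseteq> monoms n}"

definition const :: "'a::zero \<Rightarrow> 'a mpoly" where
  "const c = Poly_Mapping.single 0 c"

definition term_of :: "'a::zero \<Rightarrow> (nat \<Rightarrow>\<^sub>0 nat) \<Rightarrow> 'a mpoly" where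
  "term_of c E = Poly_Mapping.single E c"

definition is_ideal_in :: "'r::comm_ring_1 set \<Rightarrow> 'r set \<Rightarrow> bool" where
  "is_ideal_in R I \<longleftrightarrow> I \<subseteq> R \<and> 0 \<in> I \<and> (\<forall>x\<in>I. \<forall>y\<in>I. x + y \<in> I)
     \<and> (\<forall>r\<in>R. \<forall>x\<in>I. r * x \<in> I)"

definition ideal_gen :: "'r::comm_ring_1 set \<Rightarrow> 'r set \<Rightarrow> 'r set" where
  "ideal_gen R S = \<Inter>{I. is_ideal_in R I \<and> S \<subseteq> I}"

definition noetherian_ring :: "'a::comm_ring_1 itself \<Rightarrow> bool" where
  "noetherian_ring _ \<longleftrightarrow>
     (\<forall>I::'a set. is_ideal_in UNIV I \<longrightarrow> (\<exists>F. finite F \<and> I = ideal_gen UNIV F))"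

definition prime_ideal :: "'a::comm_ring_1 set \<Rightarrow> bool" where
  "prime_ideal p \<longleftrightarrow> is_ideal_in UNIV p \<and> p \<noteq> UNIV
     \<and> (\<forall>a b. a * b \<in> p \<longrightarrow> a \<in> p \<or> b \<in> p)"

(* lt E F means x^E < x^F; a monomial order on monomials in n variables *)
definition monomial_order :: "nat \<Rightarrow> ((nat \<Rightarrow>\<^sub>0 nat) \<Rightarrow> (nat \<Rightarrow>\<^sub>0 nat) \<Rightarrow> bool) \<Rightarrow> bool" where
  "monomial_order n lt \<longleftrightarrow>
     (\<forall>E\<in>monoms n. \<not> lt E E)
   \<and> (\<forall>E\<in>monoms n. \<forall>F\<in>monoms n. \<forall>G\<in>monoms n. lt E F \<longrightarrow> lt F G \<longrightarrow> lt E G)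
   \<and> (\<forall>E\<in>monoms n. \<forall>F\<in>monoms n. E \<noteq> F \<longrightarrow> lt E F \<or> lt F E)
   \<and> (\<forall>E\<in>monoms n. \<forall>F\<in>monoms n. \<forall>G\<in>monoms n. lt F E \<longrightarrow> lt (G + F) (G + E))
   \<and> (\<forall>i<n. lt 0 (Poly_Mapping.single i 1))"

definition lead_monom :: "((nat \<Rightarrow>\<^sub>0 nat) \<Rightarrow> (nat \<Rightarrow>\<^sub>0 nat) \<Rightarrow> bool) \<Rightarrow> 'a::zero mpoly \<Rightarrow> (nat \<Rightarrow>\<^sub>0 nat)" where
  "lead_monom lt f = (THE E. E \<in> Poly_Mapping.keys f \<and> (\<forall>F\<in>Poly_Mapping.keys f. F \<noteq> E \<longrightarrow> lt F E))"

definition init_term :: "((nat \<Rightarrow>\<^sub>0 nat) \<Rightarrow> (nat \<Rightarrow>\<^sub>0 nat) \<Rightarrow> bool) \<Rightarrow> 'a::zero mpoly \<Rightarrow> 'a mpoly" where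
  "init_term lt f = term_of (Poly_Mapping.lookup f (lead_monom lt f)) (lead_monom lt f)"

definition init_ideal :: "nat \<Rightarrow> ((nat \<Rightarrow>\<^sub>0 nat) \<Rightarrow> (nat \<Rightarrow>\<^sub>0 nat) \<Rightarrow> bool) \<Rightarrow> 'a::comm_ring_1 mpoly set \<Rightarrow> 'a mpoly set" where
  "init_ideal n lt I = ideal_gen (polys n) {init_term lt f | f. f \<in> I \<and> f \<noteq> 0}"

(* coefficient ideal J_{x^E} = (c | c x^E in J) in A *)
definition coeff_ideal :: "'a::comm_ring_1 mpoly set \<Rightarrow> (nat \<Rightarrow>\<^sub>0 nat) \<Rightarrow> 'a set" where
  "coeff_ideal J E = ideal_gen UNIV {c. term_of c E \<in> J}"

(* Equality of fractions g/s and h/t in M_p, M = A[x]/I, S = A - p *)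
definition loc_eq_M :: "'a::comm_ring_1 mpoly set \<Rightarrow> 'a set \<Rightarrow> 'a mpoly \<times> 'a \<Rightarrow> 'a mpoly \<times> 'a \<Rightarrow> bool" where
  "loc_eq_M I p gs ht \<longleftrightarrow>
     (\<exists>u. u \<notin> p \<and> const u * (const (snd ht) * fst gs - const (snd gs) * fst ht) \<in> I)"

(* the natural map A_p -> M_p, a/s |-> [const a]/s, is surjective:
   every element g/s of M_p (g in A[x], s notin p) is the image of some a/t *)
definition nat_map_surj :: "nat \<Rightarrow> 'a::comm_ring_1 mpoly set \<Rightarrow> 'a set \<Rightarrow> bool" where
  "nat_map_surj n I p \<longleftrightarrow>
     (\<forall>g\<in>polys n. \<forall>s. s \<notin> p \<longrightarrow>
        (\<exists>a t. t \<notin> p \<and> loc_eq_M I p (g, s) (const a, t)))"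

(* J A_p = (1) for an ideal J of A: 1/1 lies in the extended ideal
   J A_p = {c/s | c in J, s notin p}, i.e. some c/s equals 1/1 in A_p *)
definition ext_unit :: "'a::comm_ring_1 set \<Rightarrow> 'a set \<Rightarrow> bool" where
  "ext_unit J p \<longleftrightarrow> (\<exists>c\<in>J. \<exists>s. s \<notin> p \<and> (\<exists>u. u \<notin> p \<and> u * (1 * c - s * 1) = 0))"

end

theory Submission
  imports Defs
begin

(* Surjectivity of A_p -> M_p means that every polynomial is congruent in M_p to a fraction a/t
   of constants, and it suffices to check this for the variables x_i.
   If u(t x_i - a) is in I with u, t not in p, its initial term is u t x_i because x_i > 1, so
   u t lies in in(I)_{x_i} but not in p.
   Conversely, every c in in(I)_{x_i} is the x_i-coefficient of some f in I all of whose other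
   monomials are smaller than x_i, hence involve only variables x_k < x_i.  Choosing c outside p
   and inducting along the order of the variables, f = c x_i + r with r already a fraction of
   constants, so x_i = (f - r)/c is one as well. *)

section \<open>Monomials and monomial orders\<close>

abbreviation monom_var :: "nat \<Rightarrow> nat \<Rightarrow>\<^sub>0 nat" where
  "monom_var i \<equiv> Poly_Mapping.single i 1"

abbreviation poly_var :: "nat \<Rightarrow> 'a::comm_ring_1 mpoly" where
  "poly_var i \<equiv> Poly_Mapping.single (monom_var i) 1"

definition poly_vars :: "'a::zero mpoly \<Rightarrow> nat set" where
  "poly_vars g = (\<Union>E\<in>Poly_Mapping.keys g. Poly_Mapping.keys E)"

lemma update_eq_add_single:
  "a \<notin> Poly_Mapping.keys f \<Longrightarrow> Poly_Mapping.update a b f = f + Poly_Mapping.single a b"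
  by (rule poly_mapping_eqI) (auto simp: lookup_update lookup_add lookup_single in_keys_iff)

lemma monoms_zero [simp]: "0 \<in> monoms n"
  by (simp add: monoms_def)

lemma monoms_single: "i < n \<Longrightarrow> Poly_Mapping.single i b \<in> monoms n"
  by (simp add: monoms_def)

lemma monoms_add: "E \<in> monoms n \<Longrightarrow> F \<in> monoms n \<Longrightarrow> E + F \<in> monoms n"
  unfolding monoms_def using keys_add[of E F] by auto

lemma monoms_diff: "E \<in> monoms n \<Longrightarrow> E - F \<in> monoms n"
proof -
  have "Poly_Mapping.keys (E - F) \<subseteq> Poly_Mapping.keys E"
    by (auto simp: in_keys_iff lookup_minus)
  then show "E \<in> monoms n \<Longrightarrow> E - F \<in> monoms n"
    unfolding monoms_def by blast
qed

context
  fixes n :: nat and lt :: "(nat \<Rightarrow>\<^sub>0 nat) \<Rightarrow> (nat \<Rightarrow>\<^sub>0 nat) \<Rightarrow> bool"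
  assumes mo: "monomial_order n lt"
begin

lemma monomial_order_irrefl: "E \<in> monoms n \<Longrightarrow> \<not> lt E E"
  using mo unfolding monomial_order_def by blast

lemma monomial_order_trans:
  "E \<in> monoms n \<Longrightarrow> F \<in> monoms n \<Longrightarrow> G \<in> monoms n \<Longrightarrow> lt E F \<Longrightarrow> lt F G \<Longrightarrow> lt E G"
  using mo unfolding monomial_order_def by blast

lemma monomial_order_total: "E \<in> monoms n \<Longrightarrow> F \<in> monoms n \<Longrightarrow> E \<noteq> F \<Longrightarrow> lt E F \<or> lt F E"
  using mo unfolding monomial_order_def by blast

lemma monomial_order_add_left_mono:
  "E \<in> monoms n \<Longrightarrow> F \<in> monoms n \<Longrightarrow> G \<in> monoms n \<Longrightarrow> lt F E \<Longrightarrow> lt (G + F) (G + E)"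
  using mo unfolding monomial_order_def by blast

lemma monomial_order_zero_less_var: "i < n \<Longrightarrow> lt 0 (monom_var i)"
  using mo unfolding monomial_order_def by blast

lemma monomial_order_add_nonneg:
  assumes E: "E \<in> monoms n" and F: "F \<in> monoms n"
    and E_nonneg: "E = 0 \<or> lt 0 E" and F_nonneg: "F = 0 \<or> lt 0 F"
  shows "E + F = 0 \<or> lt 0 (E + F)"
proof (cases "E = 0 \<or> F = 0")
  case True
  then show ?thesis using E_nonneg F_nonneg by auto
next
  case False
  then have "lt 0 E" "lt 0 F" using E_nonneg F_nonneg by auto
  have "lt (E + 0) (E + F)"
    by (rule monomial_order_add_left_mono[OF F monoms_zero E \<open>lt 0 F\<close>])
  then show ?thesis
    using monomial_order_trans[OF monoms_zero E monoms_add[OF E F] \<open>lt 0 E\<close>] by simp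
qed

lemma monomial_order_nonneg: "E \<in> monoms n \<Longrightarrow> E = 0 \<or> lt 0 E"
proof (induction E rule: update_induct)
  case const
  then show ?case by simp
next
  case (update f a b)
  have "a < n" and f: "f \<in> monoms n"
    using update.prems update.hyps by (auto simp: monoms_def keys_update)
  have single_nonneg: "Poly_Mapping.single a m = 0 \<or> lt 0 (Poly_Mapping.single a m)" for m
  proof (induction m)
    case (Suc m)
    have "Poly_Mapping.single a (Suc m) = monom_var a + Poly_Mapping.single a m"
      by (metis plus_1_eq_Suc single_add)
    then show ?case
      using monomial_order_add_nonneg[OF monoms_single[OF \<open>a < n\<close>] monoms_single[OF \<open>a < n\<close>] _ Suc]
        monomial_order_zero_less_var[OF \<open>a < n\<close>] by auto
  qed simp
  show ?case
    using monomial_order_add_nonneg[OF f monoms_single[OF \<open>a < n\<close>] update.IH[OF f] single_nonneg]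
      update_eq_add_single[OF update.hyps(1)] by simp
qed

lemma monomial_order_var_less:
  assumes F: "F \<in> monoms n" and i: "i < n" and less: "lt F (monom_var i)"
    and k: "k \<in> Poly_Mapping.keys F"
  shows "lt (monom_var k) (monom_var i)"
proof -
  have "k < n" using F k by (auto simp: monoms_def)
  define F' where "F' = F - monom_var k"
  have F': "F' \<in> monoms n"
    unfolding F'_def by (rule monoms_diff[OF F])
  have F_eq: "F = monom_var k + F'"
    unfolding F'_def using k
    by (intro poly_mapping_eqI) (auto simp: lookup_add lookup_minus lookup_single in_keys_iff when_def)
  show ?thesis
  proof (cases "F' = 0")
    case True
    then show ?thesis using F_eq less by simp
  next
    case False
    then have "lt 0 F'" using monomial_order_nonneg[OF F'] by simp
    from monomial_order_add_left_mono[OF F' monoms_zero monoms_single[OF \<open>k < n\<close>] this]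
    have "lt (monom_var k) F" using F_eq by simp
    then show ?thesis
      using monomial_order_trans[OF monoms_single[OF \<open>k < n\<close>] F monoms_single[OF i]] less by blast
  qed
qed

lemma wf_var_order: "wf {(k, i). k < n \<and> i < n \<and> lt (monom_var k) (monom_var i)}" (is "wf ?R")
proof (rule finite_acyclic_wf)
  show "finite ?R"
    by (rule finite_subset[of _ "{..<n} \<times> {..<n}"]) auto
  have "trans ?R"
  proof (rule transI)
    fix k j i assume "(k, j) \<in> ?R" "(j, i) \<in> ?R"
    then show "(k, i) \<in> ?R"
      using monomial_order_trans[OF monoms_single monoms_single monoms_single] by blast
  qed
  moreover have "irrefl ?R"
    using monomial_order_irrefl[OF monoms_single] by (simp add: irrefl_def)
  ultimately show "acyclic ?R"
    by (simp add: acyclic_irrefl)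
qed

lemma monomial_order_finite_has_max:
  "finite A \<Longrightarrow> A \<noteq> {} \<Longrightarrow> A \<subseteq> monoms n \<Longrightarrow> \<exists>E\<in>A. \<forall>F\<in>A. F \<noteq> E \<longrightarrow> lt F E"
proof (induction A rule: finite_ne_induct)
  case (singleton x)
  then show ?case by simp
next
  case (insert x A)
  then obtain E where E: "E \<in> A" "\<forall>F\<in>A. F \<noteq> E \<longrightarrow> lt F E" by auto
  have x: "x \<in> monoms n" and A: "A \<subseteq> monoms n" using insert.prems by auto
  show ?case
  proof (cases "lt E x")
    case True
    then have "\<forall>F\<in>insert x A. F \<noteq> x \<longrightarrow> lt F x"
      using E A monomial_order_trans[OF _ _ x] by (metis insertE subsetD)
    then show ?thesis by blast
  next
    case False
    then have "x = E \<or> lt x E" using monomial_order_total[OF x, of E] A E(1) by blast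
    then show ?thesis using E by blast
  qed
qed

lemma lead_monom_eqI:
  assumes f: "f \<in> polys n" and E: "E \<in> Poly_Mapping.keys f"
    and max: "\<forall>F\<in>Poly_Mapping.keys f. F \<noteq> E \<longrightarrow> lt F E"
  shows "lead_monom lt f = E"
  unfolding lead_monom_def
proof (rule the_equality)
  show "E \<in> Poly_Mapping.keys f \<and> (\<forall>F\<in>Poly_Mapping.keys f. F \<noteq> E \<longrightarrow> lt F E)"
    using E max by blast
next
  fix E' assume E': "E' \<in> Poly_Mapping.keys f \<and> (\<forall>F\<in>Poly_Mapping.keys f. F \<noteq> E' \<longrightarrow> lt F E')"
  have monoms: "E \<in> monoms n" "E' \<in> monoms n"
    using f E E' by (auto simp: polys_def)
  show "E' = E"
  proof (rule ccontr)
    assume "E' \<noteq> E"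
    then have "lt E' E" "lt E E'" using E E' max by auto
    then show False
      using monomial_order_trans[OF monoms(1,2,1)] monomial_order_irrefl[OF monoms(1)] by blast
  qed
qed

lemma lead_monom_max:
  assumes f: "f \<in> polys n" and "f \<noteq> 0"
  shows "lead_monom lt f \<in> Poly_Mapping.keys f"
    and "\<forall>F\<in>Poly_Mapping.keys f. F \<noteq> lead_monom lt f \<longrightarrow> lt F (lead_monom lt f)"
proof -
  obtain E where "E \<in> Poly_Mapping.keys f" "\<forall>F\<in>Poly_Mapping.keys f. F \<noteq> E \<longrightarrow> lt F E"
    using monomial_order_finite_has_max[of "Poly_Mapping.keys f"] f \<open>f \<noteq> 0\<close>
    by (auto simp: polys_def)
  with lead_monom_eqI[OF f] show "lead_monom lt f \<in> Poly_Mapping.keys f"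
    and "\<forall>F\<in>Poly_Mapping.keys f. F \<noteq> lead_monom lt f \<longrightarrow> lt F (lead_monom lt f)"
    by auto
qed

end

section \<open>Polynomials, ideals and prime ideals\<close>

lemma poly_mapping_sum_single:
  "f = (\<Sum>k\<in>Poly_Mapping.keys f. Poly_Mapping.single k (Poly_Mapping.lookup f k))"
proof (rule poly_mapping_eqI)
  fix k'
  show "Poly_Mapping.lookup f k' =
      Poly_Mapping.lookup (\<Sum>k\<in>Poly_Mapping.keys f. Poly_Mapping.single k (Poly_Mapping.lookup f k)) k'"
    by (cases "k' \<in> Poly_Mapping.keys f") (auto simp: lookup_sum lookup_single when_def in_keys_iff)
qed

lemma lookup_single_mult:
  fixes h :: "'a::comm_ring_1 mpoly"
  shows "Poly_Mapping.lookup (Poly_Mapping.single G a * h) E =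
     (if \<exists>H. E = G + H then a * Poly_Mapping.lookup h (E - G) else 0)"
proof -
  have "Poly_Mapping.single G a * h =
      (\<Sum>k\<in>Poly_Mapping.keys h. Poly_Mapping.single (G + k) (a * Poly_Mapping.lookup h k))"
    by (subst poly_mapping_sum_single[of h]) (simp add: sum_distrib_left mult_single)
  then have lookup_eq: "Poly_Mapping.lookup (Poly_Mapping.single G a * h) E =
      (\<Sum>k\<in>Poly_Mapping.keys h. (a * Poly_Mapping.lookup h k when G + k = E))"
    by (simp add: lookup_sum lookup_single)
  show ?thesis
  proof (cases "\<exists>H. E = G + H")
    case True
    then obtain H where H: "E = G + H" by blast
    have "(\<Sum>k\<in>Poly_Mapping.keys h. (a * Poly_Mapping.lookup h k when G + k = E)) =
          (\<Sum>k\<in>Poly_Mapping.keys h. (a * Poly_Mapping.lookup h k when k = H))"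
      using H by (intro sum.cong) (auto simp: when_def)
    also have "\<dots> = a * Poly_Mapping.lookup h H"
      by (cases "H \<in> Poly_Mapping.keys h") (auto simp: when_def in_keys_iff)
    finally show ?thesis using lookup_eq H True by simp
  next
    case False
    then have "(\<Sum>k\<in>Poly_Mapping.keys h. (a * Poly_Mapping.lookup h k when G + k = E)) = 0"
      by (intro sum.neutral) (auto simp: when_def)
    then show ?thesis using lookup_eq False by simp
  qed
qed

lemma single_monom_var_power:
  "Poly_Mapping.single (Poly_Mapping.single i m) (1::'a::comm_ring_1) = poly_var i ^ m"
proof (induction m)
  case (Suc m)
  have "Poly_Mapping.single (Poly_Mapping.single i (Suc m)) (1::'a) =
      poly_var i * Poly_Mapping.single (Poly_Mapping.single i m) 1"
    by (simp add: mult_single single_add[symmetric])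
  then show ?case by (simp add: Suc.IH)
qed simp

lemma const_mult: "const (a * b) = const a * const (b::'a::comm_ring_1)"
  by (simp add: const_def mult_single)

lemma const_add: "const (a + b) = const a + const (b::'a::comm_ring_1)"
  by (simp add: const_def single_add)

lemma const_uminus: "const (- b) = - const (b::'a::comm_ring_1)"
  by (simp add: const_def single_uminus)

lemma const_one [simp]: "const 1 = (1::'a::comm_ring_1 mpoly)"
  by (simp add: const_def)

lemma const_zero [simp]: "const 0 = (0::'a::comm_ring_1 mpoly)"
  by (simp add: const_def)

lemma polys_single: "E \<in> monoms n \<Longrightarrow> Poly_Mapping.single E c \<in> polys n"
  by (simp add: polys_def)

lemma polys_const: "const c \<in> polys n"
  by (simp add: const_def polys_single)

lemma polys_add: "f \<in> polys n \<Longrightarrow> g \<in> polys n \<Longrightarrow> f + g \<in> polys n"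
  unfolding polys_def using keys_add[of f g] by auto

lemma polys_diff: "f \<in> polys n \<Longrightarrow> g \<in> polys n \<Longrightarrow> f - (g::'a::comm_ring_1 mpoly) \<in> polys n"
  unfolding polys_def using keys_add[of f "- g"] by auto

lemma polys_mult: "f \<in> polys n \<Longrightarrow> g \<in> polys n \<Longrightarrow> f * (g::'a::comm_ring_1 mpoly) \<in> polys n"
  unfolding polys_def using keys_mult[of f g] monoms_add by blast

lemma is_ideal_in_subset: "is_ideal_in R I \<Longrightarrow> x \<in> I \<Longrightarrow> x \<in> R"
  unfolding is_ideal_in_def by blast

lemma is_ideal_in_zero: "is_ideal_in R I \<Longrightarrow> 0 \<in> I"
  unfolding is_ideal_in_def by blast

lemma is_ideal_in_add: "is_ideal_in R I \<Longrightarrow> x \<in> I \<Longrightarrow> y \<in> I \<Longrightarrow> x + y \<in> I"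
  unfolding is_ideal_in_def by blast

lemma is_ideal_in_mult: "is_ideal_in R I \<Longrightarrow> r \<in> R \<Longrightarrow> x \<in> I \<Longrightarrow> r * x \<in> I"
  unfolding is_ideal_in_def by blast

lemma is_ideal_in_polys_diff:
  assumes "is_ideal_in (polys n) I" "x \<in> I" "y \<in> I"
  shows "x - (y::'a::comm_ring_1 mpoly) \<in> I"
proof -
  have "x + const (- 1) * y \<in> I"
    using assms by (intro is_ideal_in_add[OF assms(1)] is_ideal_in_mult[OF assms(1) polys_const])
  then show ?thesis by (simp add: const_uminus)
qed

lemma ideal_gen_superset: "S \<subseteq> ideal_gen R S"
  unfolding ideal_gen_def by blast

lemma init_term_in_init_ideal: "f \<in> I \<Longrightarrow> f \<noteq> 0 \<Longrightarrow> init_term lt f \<in> init_ideal n lt I"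
  unfolding init_ideal_def by (rule subsetD[OF ideal_gen_superset]) blast

lemma in_coeff_ideal: "term_of c E \<in> J \<Longrightarrow> c \<in> coeff_ideal J E"
  unfolding coeff_ideal_def by (rule subsetD[OF ideal_gen_superset]) simp

lemma prime_ideal_zero: "prime_ideal p \<Longrightarrow> 0 \<in> p"
  unfolding prime_ideal_def is_ideal_in_def by blast

lemma prime_ideal_one: "prime_ideal p \<Longrightarrow> 1 \<notin> p"
  unfolding prime_ideal_def is_ideal_in_def by (metis UNIV_I mult.right_neutral subsetI subset_antisym)

lemma prime_ideal_mult_notin: "prime_ideal p \<Longrightarrow> s \<notin> p \<Longrightarrow> t \<notin> p \<Longrightarrow> s * t \<notin> p"
  unfolding prime_ideal_def by blast

lemma prime_ideal_mult_left: "prime_ideal p \<Longrightarrow> c \<in> p \<Longrightarrow> r * c \<in> p"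
  unfolding prime_ideal_def is_ideal_in_def by blast

lemma ext_unit_iff_not_subset:
  assumes p: "prime_ideal p"
  shows "ext_unit J p \<longleftrightarrow> \<not> J \<subseteq> p"
proof
  assume "ext_unit J p"
  then obtain c s u where c: "c \<in> J" and s: "s \<notin> p" and u: "u \<notin> p"
    and "u * (1 * c - s * 1) = 0"
    unfolding ext_unit_def by blast
  then have "u * c = u * s"
    by (simp add: right_diff_distrib)
  moreover have "u * s \<notin> p"
    by (rule prime_ideal_mult_notin[OF p u s])
  ultimately show "\<not> J \<subseteq> p"
    using c prime_ideal_mult_left[OF p, of c u] by auto
next
  assume "\<not> J \<subseteq> p"
  then obtain c where "c \<in> J" "c \<notin> p" by blast
  moreover have "1 * (1 * c - c * 1) = 0"
    by simp
  ultimately show "ext_unit J p"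
    unfolding ext_unit_def using prime_ideal_one[OF p] by blast
qed

section \<open>Polynomials whose class in the localization is a fraction of constants\<close>

(* The class of g in M_p is a/t, i.e. it lies in the image of A_p. *)
definition loc_const :: "nat \<Rightarrow> 'a::comm_ring_1 mpoly set \<Rightarrow> 'a set \<Rightarrow> 'a mpoly \<Rightarrow> bool" where
  "loc_const n I p g \<longleftrightarrow>
     g \<in> polys n \<and> (\<exists>a t u. t \<notin> p \<and> u \<notin> p \<and> const u * (g * const t - const a) \<in> I)"

context
  fixes n :: nat and I :: "'a::comm_ring_1 mpoly set" and p :: "'a set"
  assumes I: "is_ideal_in (polys n) I" and p: "prime_ideal p"
begin

lemma nat_map_surj_iff_loc_const: "nat_map_surj n I p \<longleftrightarrow> (\<forall>g\<in>polys n. loc_const n I p g)"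
proof
  assume surj: "nat_map_surj n I p"
  show "\<forall>g\<in>polys n. loc_const n I p g"
  proof
    fix g :: "'a mpoly" assume g: "g \<in> polys n"
    then obtain a t u where "t \<notin> p" "u \<notin> p" "const u * (const t * g - const 1 * const a) \<in> I"
      using surj prime_ideal_one[OF p] unfolding nat_map_surj_def loc_eq_M_def by fastforce
    moreover have "const t * g - const 1 * const a = g * const t - const a"
      by (simp add: mult.commute)
    ultimately show "loc_const n I p g"
      unfolding loc_const_def using g by metis
  qed
next
  assume loc: "\<forall>g\<in>polys n. loc_const n I p g"
  show "nat_map_surj n I p"
    unfolding nat_map_surj_def
  proof (intro ballI allI impI)
    fix g :: "'a mpoly" and s :: 'a assume g: "g \<in> polys n" and s: "s \<notin> p"
    obtain a t u where tu: "t \<notin> p" "u \<notin> p" and inI: "const u * (g * const t - const a) \<in> I"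
      using loc g unfolding loc_const_def by blast
    have "const u * (const (t * s) * g - const s * const a) = const s * (const u * (g * const t - const a))"
      by (simp add: const_mult algebra_simps)
    also have "\<dots> \<in> I"
      by (rule is_ideal_in_mult[OF I polys_const inI])
    finally have "loc_eq_M I p (g, s) (const a, t * s)"
      unfolding loc_eq_M_def using tu(2) by auto
    then show "\<exists>a t. t \<notin> p \<and> loc_eq_M I p (g, s) (const a, t)"
      using prime_ideal_mult_notin[OF p tu(1) s] by blast
  qed
qed

lemma loc_const_const: "loc_const n I p (const c)"
proof -
  have "const 1 * (const c * const 1 - const c) = (0 :: 'a mpoly)"
    by simp
  then show ?thesis
    unfolding loc_const_def using polys_const is_ideal_in_zero[OF I] prime_ideal_one[OF p] by metis
qed

lemma loc_const_add:
  assumes "loc_const n I p g1" "loc_const n I p g2"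
  shows "loc_const n I p (g1 + g2)"
proof -
  obtain a1 t1 u1 where 1: "t1 \<notin> p" "u1 \<notin> p" "const u1 * (g1 * const t1 - const a1) \<in> I" "g1 \<in> polys n"
    using assms(1) unfolding loc_const_def by blast
  obtain a2 t2 u2 where 2: "t2 \<notin> p" "u2 \<notin> p" "const u2 * (g2 * const t2 - const a2) \<in> I" "g2 \<in> polys n"
    using assms(2) unfolding loc_const_def by blast
  have "const (u1 * u2) * ((g1 + g2) * const (t1 * t2) - const (a1 * t2 + a2 * t1)) =
      (const u2 * const t2) * (const u1 * (g1 * const t1 - const a1)) +
      (const u1 * const t1) * (const u2 * (g2 * const t2 - const a2))"
    by (simp add: const_mult const_add algebra_simps)
  also have "\<dots> \<in> I"
    by (intro is_ideal_in_add[OF I] is_ideal_in_mult[OF I _ 1(3)] is_ideal_in_mult[OF I _ 2(3)]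
        polys_mult polys_const 2(4))
  finally show ?thesis
    unfolding loc_const_def using 1 2 prime_ideal_mult_notin[OF p] polys_add by blast
qed

lemma loc_const_mult:
  assumes "loc_const n I p g1" "loc_const n I p g2"
  shows "loc_const n I p (g1 * g2)"
proof -
  obtain a1 t1 u1 where 1: "t1 \<notin> p" "u1 \<notin> p" "const u1 * (g1 * const t1 - const a1) \<in> I" "g1 \<in> polys n"
    using assms(1) unfolding loc_const_def by blast
  obtain a2 t2 u2 where 2: "t2 \<notin> p" "u2 \<notin> p" "const u2 * (g2 * const t2 - const a2) \<in> I" "g2 \<in> polys n"
    using assms(2) unfolding loc_const_def by blast
  have "const (u1 * u2) * (g1 * g2 * const (t1 * t2) - const (a1 * a2)) =
      (const u2 * g2 * const t2) * (const u1 * (g1 * const t1 - const a1)) +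
      (const u1 * const a1) * (const u2 * (g2 * const t2 - const a2))"
    by (simp add: const_mult algebra_simps)
  also have "\<dots> \<in> I"
    by (intro is_ideal_in_add[OF I] is_ideal_in_mult[OF I _ 1(3)] is_ideal_in_mult[OF I _ 2(3)]
        polys_mult polys_const 2(4))
  finally show ?thesis
    unfolding loc_const_def using 1 2 prime_ideal_mult_notin[OF p] polys_mult by blast
qed

lemma loc_const_sum: "(\<And>k. k \<in> K \<Longrightarrow> loc_const n I p (f k)) \<Longrightarrow> loc_const n I p (sum f K)"
  using loc_const_const[of 0]
  by (induction K rule: infinite_finite_induct) (auto intro: loc_const_add)

lemma loc_const_power: "loc_const n I p g \<Longrightarrow> loc_const n I p (g ^ m)"
  using loc_const_const[of 1] by (induction m) (auto intro: loc_const_mult)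

lemma loc_const_monom:
  "(\<And>k. k \<in> Poly_Mapping.keys E \<Longrightarrow> loc_const n I p (poly_var k)) \<Longrightarrow>
    loc_const n I p (Poly_Mapping.single E 1)"
proof (induction E rule: update_induct)
  case const
  then show ?case using loc_const_const[of 1] by simp
next
  case (update f a b)
  have keys: "Poly_Mapping.keys (Poly_Mapping.update a b f) = insert a (Poly_Mapping.keys f)"
    using update.hyps by (simp add: keys_update)
  have single_eq: "Poly_Mapping.single (Poly_Mapping.update a b f) (1::'a) =
      Poly_Mapping.single f 1 * poly_var a ^ b"
    unfolding single_monom_var_power[of a b, symmetric]
    by (simp add: update_eq_add_single[OF update.hyps(1)] mult_single)
  show ?case
    unfolding single_eq
  proof (intro loc_const_mult loc_const_power)
    show "loc_const n I p (Poly_Mapping.single f 1)"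
      by (rule update.IH, rule update.prems) (simp add: keys)
    show "loc_const n I p (poly_var a)"
      by (rule update.prems) (simp add: keys)
  qed
qed

lemma loc_const_of_vars:
  assumes g: "g \<in> polys n" and vars: "\<And>k. k \<in> poly_vars g \<Longrightarrow> loc_const n I p (poly_var k)"
  shows "loc_const n I p g"
proof -
  have "loc_const n I p (\<Sum>E\<in>Poly_Mapping.keys g. Poly_Mapping.single E (Poly_Mapping.lookup g E))"
  proof (rule loc_const_sum)
    fix E assume E: "E \<in> Poly_Mapping.keys g"
    have "Poly_Mapping.single E (Poly_Mapping.lookup g E) =
        const (Poly_Mapping.lookup g E) * Poly_Mapping.single E 1"
      by (simp add: const_def mult_single)
    moreover have "loc_const n I p (Poly_Mapping.single E 1)"
    proof (rule loc_const_monom)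
      fix k assume "k \<in> Poly_Mapping.keys E"
      then show "loc_const n I p (poly_var k)"
        using E vars by (auto simp: poly_vars_def)
    qed
    ultimately show "loc_const n I p (Poly_Mapping.single E (Poly_Mapping.lookup g E))"
      using loc_const_mult[OF loc_const_const] by simp
  qed
  then show ?thesis
    by (subst poly_mapping_sum_single[of g])
qed

lemma loc_const_polys_iff_vars:
  "(\<forall>g\<in>polys n. loc_const n I p g) \<longleftrightarrow> (\<forall>i<n. loc_const n I p (poly_var i))"
proof
  assume "\<forall>i<n. loc_const n I p (poly_var i)"
  moreover have "k < n" if "g \<in> polys n" "k \<in> poly_vars g" for g :: "'a mpoly" and k
    using that by (auto simp: polys_def monoms_def poly_vars_def)
  ultimately show "\<forall>g\<in>polys n. loc_const n I p g"
    using loc_const_of_vars by blast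
qed (auto intro: polys_single monoms_single)

end

section \<open>Coefficient ideals of the initial ideal\<close>

definition is_top_coeff ::
    "((nat \<Rightarrow>\<^sub>0 nat) \<Rightarrow> (nat \<Rightarrow>\<^sub>0 nat) \<Rightarrow> bool) \<Rightarrow> 'a::comm_ring_1 mpoly set \<Rightarrow> (nat \<Rightarrow>\<^sub>0 nat) \<Rightarrow> 'a \<Rightarrow> bool"
  where "is_top_coeff lt I E c \<longleftrightarrow>
    (\<exists>f\<in>I. Poly_Mapping.lookup f E = c \<and> (\<forall>F\<in>Poly_Mapping.keys f. F = E \<or> lt F E))"

(* Elements of in(I) are sums of multiples of initial terms, not initial terms themselves;
   this coefficientwise description is an ideal containing every in(f), hence all of in(I). *)
definition top_coeff_polys ::
    "nat \<Rightarrow> ((nat \<Rightarrow>\<^sub>0 nat) \<Rightarrow> (nat \<Rightarrow>\<^sub>0 nat) \<Rightarrow> bool) \<Rightarrow> 'a::comm_ring_1 mpoly set \<Rightarrow> 'a mpoly set"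
  where "top_coeff_polys n lt I =
    {h \<in> polys n. \<forall>E\<in>monoms n. is_top_coeff lt I E (Poly_Mapping.lookup h E)}"

context
  fixes n :: nat and lt :: "(nat \<Rightarrow>\<^sub>0 nat) \<Rightarrow> (nat \<Rightarrow>\<^sub>0 nat) \<Rightarrow> bool"
    and I :: "'a::comm_ring_1 mpoly set"
  assumes mo: "monomial_order n lt" and I: "is_ideal_in (polys n) I"
begin

lemma is_top_coeff_zero: "is_top_coeff lt I E 0"
  unfolding is_top_coeff_def using is_ideal_in_zero[OF I] by (intro bexI[of _ 0]) auto

lemma is_top_coeff_add: "is_top_coeff lt I E c1 \<Longrightarrow> is_top_coeff lt I E c2 \<Longrightarrow> is_top_coeff lt I E (c1 + c2)"
  unfolding is_top_coeff_def
proof (elim bexE conjE)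
  fix f1 f2
  assume "f1 \<in> I" "f2 \<in> I" "Poly_Mapping.lookup f1 E = c1" "Poly_Mapping.lookup f2 E = c2"
    "\<forall>F\<in>Poly_Mapping.keys f1. F = E \<or> lt F E" "\<forall>F\<in>Poly_Mapping.keys f2. F = E \<or> lt F E"
  then show "\<exists>f\<in>I. Poly_Mapping.lookup f E = c1 + c2 \<and> (\<forall>F\<in>Poly_Mapping.keys f. F = E \<or> lt F E)"
    using is_ideal_in_add[OF I] keys_add[of f1 f2] by (intro bexI[of _ "f1 + f2"]) (auto simp: lookup_add)
qed

lemma is_top_coeff_mult:
  assumes G: "G \<in> monoms n" and E: "E \<in> monoms n" and c: "is_top_coeff lt I E c"
  shows "is_top_coeff lt I (G + E) (a * c)"
proof -
  obtain f where f: "f \<in> I" "Poly_Mapping.lookup f E = c" "\<forall>F\<in>Poly_Mapping.keys f. F = E \<or> lt F E"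
    using c unfolding is_top_coeff_def by blast
  have f_polys: "f \<in> polys n" using is_ideal_in_subset[OF I f(1)] .
  have "Poly_Mapping.single G a * f \<in> I"
    using is_ideal_in_mult[OF I polys_single[OF G] f(1)] .
  moreover have "Poly_Mapping.lookup (Poly_Mapping.single G a * f) (G + E) = a * c"
    using f(2) by (subst lookup_single_mult) auto
  moreover have "\<forall>F\<in>Poly_Mapping.keys (Poly_Mapping.single G a * f). F = G + E \<or> lt F (G + E)"
  proof
    fix F assume "F \<in> Poly_Mapping.keys (Poly_Mapping.single G a * f)"
    then obtain F0 where F0: "F0 \<in> Poly_Mapping.keys f" "F = G + F0"
      using keys_mult[of "Poly_Mapping.single G a" f] by (auto split: if_splits)
    have "F0 \<in> monoms n" using f_polys F0(1) by (auto simp: polys_def)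
    then show "F = G + E \<or> lt F (G + E)"
      using f(3) F0 monomial_order_add_left_mono[OF mo E _ G, of F0] by (cases "F0 = E") auto
  qed
  ultimately show ?thesis unfolding is_top_coeff_def by blast
qed

lemma top_coeff_polys_single_mult:
  assumes G: "G \<in> monoms n" and h: "h \<in> top_coeff_polys n lt I"
  shows "Poly_Mapping.single G a * h \<in> top_coeff_polys n lt I"
proof -
  have "is_top_coeff lt I E (Poly_Mapping.lookup (Poly_Mapping.single G a * h) E)" if E: "E \<in> monoms n" for E
  proof (cases "\<exists>H. E = G + H")
    case True
    then obtain H where H: "E = G + H" by blast
    have H_monom: "H \<in> monoms n" using monoms_diff[OF E, of G] H by simp
    then have "is_top_coeff lt I H (Poly_Mapping.lookup h H)"
      using h by (simp add: top_coeff_polys_def)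
    from is_top_coeff_mult[OF G H_monom this, of a] show ?thesis
      using H by (simp add: lookup_single_mult)
  next
    case False
    then show ?thesis using is_top_coeff_zero by (simp add: lookup_single_mult)
  qed
  moreover have "h \<in> polys n" using h by (simp add: top_coeff_polys_def)
  ultimately show ?thesis
    unfolding top_coeff_polys_def using polys_mult[OF polys_single[OF G]] by blast
qed

lemma top_coeff_polys_zero: "0 \<in> top_coeff_polys n lt I"
  unfolding top_coeff_polys_def using is_top_coeff_zero by (auto simp: polys_def)

lemma top_coeff_polys_add:
  "h1 \<in> top_coeff_polys n lt I \<Longrightarrow> h2 \<in> top_coeff_polys n lt I \<Longrightarrow> h1 + h2 \<in> top_coeff_polys n lt I"
  using is_top_coeff_add polys_add unfolding top_coeff_polys_def by (auto simp: lookup_add)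

lemma top_coeff_polys_sum:
  "(\<And>k. k \<in> K \<Longrightarrow> g k \<in> top_coeff_polys n lt I) \<Longrightarrow> sum g K \<in> top_coeff_polys n lt I"
  by (induction K rule: infinite_finite_induct) (auto intro: top_coeff_polys_zero top_coeff_polys_add)

lemma top_coeff_polys_ideal: "is_ideal_in (polys n) (top_coeff_polys n lt I)"
proof -
  have "r * h \<in> top_coeff_polys n lt I" if r: "r \<in> polys n" and h: "h \<in> top_coeff_polys n lt I" for r h
  proof -
    have "r * h = (\<Sum>G\<in>Poly_Mapping.keys r. Poly_Mapping.single G (Poly_Mapping.lookup r G) * h)"
      by (subst poly_mapping_sum_single[of r]) (simp add: sum_distrib_right)
    also have "\<dots> \<in> top_coeff_polys n lt I"
      using r by (intro top_coeff_polys_sum top_coeff_polys_single_mult h) (auto simp: polys_def)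
    finally show ?thesis .
  qed
  then show ?thesis
    unfolding is_ideal_in_def using top_coeff_polys_zero top_coeff_polys_add
    by (auto simp: top_coeff_polys_def)
qed

lemma init_term_in_top_coeff_polys:
  assumes f: "f \<in> I" "f \<noteq> 0"
  shows "init_term lt f \<in> top_coeff_polys n lt I"
proof -
  have f_polys: "f \<in> polys n" using is_ideal_in_subset[OF I f(1)] .
  define E0 where "E0 = lead_monom lt f"
  have E0: "E0 \<in> Poly_Mapping.keys f" "\<forall>F\<in>Poly_Mapping.keys f. F \<noteq> E0 \<longrightarrow> lt F E0"
    unfolding E0_def using lead_monom_max[OF mo f_polys f(2)] by blast+
  have init: "init_term lt f = Poly_Mapping.single E0 (Poly_Mapping.lookup f E0)"
    by (simp add: init_term_def term_of_def E0_def)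
  have "is_top_coeff lt I E (Poly_Mapping.lookup (init_term lt f) E)" for E
  proof (cases "E = E0")
    case True
    then show ?thesis unfolding init is_top_coeff_def using f(1) E0(2) by auto
  next
    case False
    then show ?thesis unfolding init using is_top_coeff_zero by (simp add: lookup_single)
  qed
  moreover have "E0 \<in> monoms n" using f_polys E0(1) by (auto simp: polys_def)
  ultimately show ?thesis
    unfolding top_coeff_polys_def init using polys_single by auto
qed

lemma init_ideal_subset_top_coeff_polys: "init_ideal n lt I \<subseteq> top_coeff_polys n lt I"
  unfolding init_ideal_def ideal_gen_def using top_coeff_polys_ideal init_term_in_top_coeff_polys by blast

lemma is_top_coeff_if_in_coeff_ideal:
  assumes E: "E \<in> monoms n" and c: "c \<in> coeff_ideal (init_ideal n lt I) E"
  shows "is_top_coeff lt I E c"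
proof -
  have "is_ideal_in UNIV {c. is_top_coeff lt I E c}"
    unfolding is_ideal_in_def
    using is_top_coeff_zero is_top_coeff_add is_top_coeff_mult[OF monoms_zero E] by auto
  moreover have "{c. term_of c E \<in> init_ideal n lt I} \<subseteq> {c. is_top_coeff lt I E c}"
    using init_ideal_subset_top_coeff_polys E by (force simp: top_coeff_polys_def term_of_def)
  ultimately show ?thesis
    using c unfolding coeff_ideal_def ideal_gen_def by blast
qed

end

context
  fixes n :: nat and lt :: "(nat \<Rightarrow>\<^sub>0 nat) \<Rightarrow> (nat \<Rightarrow>\<^sub>0 nat) \<Rightarrow> bool"
    and I :: "'a::comm_ring_1 mpoly set" and p :: "'a set"
  assumes mo: "monomial_order n lt" and I: "is_ideal_in (polys n) I" and p: "prime_ideal p"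
begin

lemma coeff_ideal_var_not_subset_if_loc_const:
  assumes i: "i < n" and loc: "loc_const n I p (poly_var i)"
  shows "\<not> coeff_ideal (init_ideal n lt I) (monom_var i) \<subseteq> p"
proof -
  obtain a t u where "t \<notin> p" "u \<notin> p" and in_I: "const u * (poly_var i * const t - const a) \<in> I"
    using loc unfolding loc_const_def by blast
  define f :: "'a mpoly" where "f = const u * (poly_var i * const t - const a)"
  have f_in: "f \<in> I" unfolding f_def by (rule in_I)
  have f_eq: "f = Poly_Mapping.single (monom_var i) (u * t) - Poly_Mapping.single 0 (u * a)"
    unfolding f_def const_def by (simp add: algebra_simps mult_single)
  have ut: "u * t \<notin> p" using prime_ideal_mult_notin[OF p \<open>u \<notin> p\<close> \<open>t \<notin> p\<close>] .
  have "monom_var i \<noteq> 0" by (metis lookup_single_eq lookup_zero one_neq_zero)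
  then have lookup_f: "Poly_Mapping.lookup f (monom_var i) = u * t"
    unfolding f_eq by (simp add: lookup_minus lookup_single when_def)
  then have key: "monom_var i \<in> Poly_Mapping.keys f"
    using ut prime_ideal_zero[OF p] by (auto simp: in_keys_iff)
  have "Poly_Mapping.keys f \<subseteq> {monom_var i, 0}"
    unfolding f_eq by (auto simp: in_keys_iff lookup_minus lookup_single when_def split: if_splits)
  then have "lead_monom lt f = monom_var i"
    using lead_monom_eqI[OF mo is_ideal_in_subset[OF I f_in] key] monomial_order_zero_less_var[OF mo i]
    by blast
  then have "init_term lt f = term_of (u * t) (monom_var i)"
    using lookup_f by (simp add: init_term_def)
  moreover have "init_term lt f \<in> init_ideal n lt I"
    using key by (intro init_term_in_init_ideal f_in) auto
  ultimately have "term_of (u * t) (monom_var i) \<in> init_ideal n lt I"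
    by simp
  then show ?thesis
    using in_coeff_ideal ut by blast
qed

lemma loc_const_var_step:
  assumes i: "i < n"
    and not_subset: "\<not> coeff_ideal (init_ideal n lt I) (monom_var i) \<subseteq> p"
    and smaller: "\<And>k. k < n \<Longrightarrow> lt (monom_var k) (monom_var i) \<Longrightarrow> loc_const n I p (poly_var k)"
  shows "loc_const n I p (poly_var i)"
proof -
  obtain c where c: "c \<in> coeff_ideal (init_ideal n lt I) (monom_var i)" "c \<notin> p"
    using not_subset by blast
  obtain f where f: "f \<in> I" "Poly_Mapping.lookup f (monom_var i) = c"
    and below: "\<forall>F\<in>Poly_Mapping.keys f. F = monom_var i \<or> lt F (monom_var i)"
    using is_top_coeff_if_in_coeff_ideal[OF mo I monoms_single[OF i] c(1)]
    unfolding is_top_coeff_def by blast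
  have f_polys: "f \<in> polys n" using is_ideal_in_subset[OF I f(1)] .
  define r where "r = f - Poly_Mapping.single (monom_var i) c"
  have r_polys: "r \<in> polys n"
    unfolding r_def by (intro polys_diff f_polys polys_single monoms_single i)
  have keys_r: "E \<in> Poly_Mapping.keys f - {monom_var i}" if "E \<in> Poly_Mapping.keys r" for E
    using that f(2) unfolding r_def
    by (auto simp: in_keys_iff lookup_minus lookup_single when_def split: if_splits)
  have "loc_const n I p r"
  proof (rule loc_const_of_vars[OF I p r_polys])
    fix k assume "k \<in> poly_vars r"
    then obtain E where E: "E \<in> Poly_Mapping.keys r" and k: "k \<in> Poly_Mapping.keys E"
      by (auto simp: poly_vars_def)
    have E_monom: "E \<in> monoms n" using keys_r[OF E] f_polys by (auto simp: polys_def)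
    then have "k < n" using k by (auto simp: monoms_def)
    moreover have "lt E (monom_var i)" using keys_r[OF E] below by blast
    ultimately show "loc_const n I p (poly_var k)"
      using monomial_order_var_less[OF mo E_monom i _ k] smaller by blast
  qed
  then obtain a t u where "t \<notin> p" "u \<notin> p" and r_in: "const u * (r * const t - const a) \<in> I"
    unfolding loc_const_def by blast
  have "f = r + const c * poly_var i"
    unfolding r_def const_def by (simp add: mult_single)
  then have "const u * (poly_var i * const (c * t) - const (- a)) =
      (const u * const t) * f - const u * (r * const t - const a)"
    by (simp add: const_mult const_uminus algebra_simps)
  also have "\<dots> \<in> I"
    by (intro is_ideal_in_polys_diff[OF I is_ideal_in_mult[OF I _ f(1)] r_in] polys_mult polys_const)
  finally show ?thesis
    unfolding loc_const_def
    using polys_single[OF monoms_single[OF i]] prime_ideal_mult_notin[OF p c(2) \<open>t \<notin> p\<close>] \<open>u \<notin> p\<close>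
    by blast
qed

lemma loc_const_vars_if_coeff_ideals_not_subset:
  assumes "\<forall>i<n. \<not> coeff_ideal (init_ideal n lt I) (monom_var i) \<subseteq> p"
  shows "i < n \<Longrightarrow> loc_const n I p (poly_var i)"
proof (induction i rule: wf_induct_rule[OF wf_var_order[OF mo]])
  case (1 i)
  then show ?case using loc_const_var_step assms by blast
qed

end

theorem proposition5p1:
  fixes n :: nat
    and lt :: "(nat \<Rightarrow>\<^sub>0 nat) \<Rightarrow> (nat \<Rightarrow>\<^sub>0 nat) \<Rightarrow> bool"
    and I :: "'a::comm_ring_1 mpoly set"
    and p :: "'a set"
  assumes "noetherian_ring TYPE('a)"
    and "monomial_order n lt"
    and "is_ideal_in (polys n) I"
    and "prime_ideal p"
  shows "nat_map_surj n I p \<longleftrightarrow>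
         (\<forall>i<n. ext_unit (coeff_ideal (init_ideal n lt I) (Poly_Mapping.single i 1)) p)"
proof -
  note mo = assms(2) and I = assms(3) and p = assms(4)
  have "nat_map_surj n I p \<longleftrightarrow> (\<forall>i<n. loc_const n I p (poly_var i))"
    using nat_map_surj_iff_loc_const[OF I p] loc_const_polys_iff_vars[OF I p] by simp
  also have "\<dots> \<longleftrightarrow> (\<forall>i<n. \<not> coeff_ideal (init_ideal n lt I) (monom_var i) \<subseteq> p)"
    using coeff_ideal_var_not_subset_if_loc_const[OF mo I p]
      loc_const_vars_if_coeff_ideals_not_subset[OF mo I p] by blast
  also have "\<dots> \<longleftrightarrow> (\<forall>i<n. ext_unit (coeff_ideal (init_ideal n lt I) (monom_var i)) p)"
    using ext_unit_iff_not_subset[OF p] by simp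
  finally show ?thesis .
qed

end
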